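(* Let $n,m\ge1$ be integers (not necessarily distinct). Then for the Ramsey number $\mathcal{R}_{\mathcal{MAT}}$ with respect to the class $\mathcal{MAT}$ of matrix graphs, \[ \mathcal{R}_{\mathcal{MAT}}(n,m)=\mathcal{R}_{\mathcal{PO}}(n,m)=(n-1)(m-1)+1 . \]
   Context: For a commutative ring $R$ (with $1\ne0$) that is not a field and an integer $j\ge2$, let $V$ be the set of $j\times j$ matrices over $R$ whose determinant is a proper element (non-zero non-unit) of $R$. The matrix graph $\mathrm{Mat}(R)$ has vertex set $V$, distinct $A,B$ adjacent iff $\det(A)\parallel\det(B)$ or $\det(B)\parallel\det(A)$, where $a\parallel b$ means $a\mid b$ and $b\nmid a$. $\mathcal{MAT}$ is the class of all matrix graphs (over all such $R$ and $j$). $\mathcal{PO}$ is the class of partial order graphs $G_A$ of posets $(A,\le)$ (distinct vertices adjacent iff comparable). For a class $\mathcal{C}$ of graphs, $\mathcal{R}_{\mathcal{C}}(n,m)$ is the minimal $r$ such that every induced subgraph with $r$ vertices of any graph in $\mathcal{C}$ contains either $K_n$ or an independent set of $m$ vertices. *)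

theory Defs
  imports Main "Jordan_Normal_Form.Determinant"
begin

definition has_clique :: "('v \<Rightarrow> 'v \<Rightarrow> bool) \<Rightarrow> 'v set \<Rightarrow> nat \<Rightarrow> bool" where
  "has_clique E S k \<longleftrightarrow> (\<exists>K\<subseteq>S. finite K \<and> card K = k \<and> (\<forall>x\<in>K. \<forall>y\<in>K. x \<noteq> y \<longrightarrow> E x y))"

definition has_indep :: "('v \<Rightarrow> 'v \<Rightarrow> bool) \<Rightarrow> 'v set \<Rightarrow> nat \<Rightarrow> bool" where
  "has_indep E S k \<longleftrightarrow> (\<exists>K\<subseteq>S. finite K \<and> card K = k \<and> (\<forall>x\<in>K. \<forall>y\<in>K. x \<noteq> y \<longrightarrow> \<not> E x y))"

definition ramsey_good :: "'v set \<Rightarrow> ('v \<Rightarrow> 'v \<Rightarrow> bool) \<Rightarrow> nat \<Rightarrow> nat \<Rightarrow> nat \<Rightarrow> bool" where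
  "ramsey_good V E r n m \<longleftrightarrow>
     (\<forall>S\<subseteq>V. finite S \<and> card S = r \<longrightarrow> has_clique E S n \<or> has_indep E S m)"

definition proper_elem :: "'a::comm_ring_1 \<Rightarrow> bool" where
  "proper_elem x \<longleftrightarrow> x \<noteq> 0 \<and> \<not> x dvd 1"

definition sdvd :: "'a::comm_ring_1 \<Rightarrow> 'a \<Rightarrow> bool" where
  "sdvd a b \<longleftrightarrow> a dvd b \<and> \<not> b dvd a"

definition mat_vertices :: "nat \<Rightarrow> 'a::comm_ring_1 mat set" where
  "mat_vertices j = {A. A \<in> carrier_mat j j \<and> proper_elem (det A)}"

definition mat_adj :: "'a::comm_ring_1 mat \<Rightarrow> 'a mat \<Rightarrow> bool" where
  "mat_adj A B \<longleftrightarrow> A \<noteq> B \<and> (sdvd (det A) (det B) \<or> sdvd (det B) (det A))"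

definition po_adj :: "'b rel \<Rightarrow> 'b \<Rightarrow> 'b \<Rightarrow> bool" where
  "po_adj R x y \<longleftrightarrow> x \<noteq> y \<and> ((x, y) \<in> R \<or> (y, x) \<in> R)"

end

theory Submission
  imports Defs "HOL-Library.Nat_Bijection"
begin

(* Both graphs are comparability graphs of strict partial orders: strict divisibility of
   determinants, resp. the strict part of the order. Upper bound (Mirsky): the maximal
   elements of a finite poset form an antichain, and every chain of the remaining poset
   extends by a maximal element; so by induction on n, more than (n-1)(m-1) elements
   contain a chain of n or an antichain of m. Lower bound: both classes contain the
   complete (n-1)-partite graph with parts of size m-1, whose cliques meet each part
   at most once and whose independent sets lie inside one part. *)

definition comparability :: "('v \<Rightarrow> 'v \<Rightarrow> bool) \<Rightarrow> 'v \<Rightarrow> 'v \<Rightarrow> bool" where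
  "comparability lt x y \<longleftrightarrow> x \<noteq> y \<and> (lt x y \<or> lt y x)"

lemma has_indep_eq_has_clique_compl: "has_indep E S k = has_clique (\<lambda>x y. \<not> E x y) S k"
  unfolding has_indep_def has_clique_def ..

lemma has_clique_image:
  assumes "inj_on f S"
  shows "has_clique E (f ` S) k \<longleftrightarrow> has_clique (\<lambda>x y. E (f x) (f y)) S k"
proof
  assume "has_clique E (f ` S) k"
  then obtain K where K: "K \<subseteq> f ` S" "finite K" "card K = k" "\<forall>x\<in>K. \<forall>y\<in>K. x \<noteq> y \<longrightarrow> E x y"
    unfolding has_clique_def by blast
  then obtain K' where K': "K' \<subseteq> S" "K = f ` K'"
    by (meson subset_image_iff)
  have "inj_on f K'"
    using assms K'(1) inj_on_subset by blast
  then show "has_clique (\<lambda>x y. E (f x) (f y)) S k"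
    unfolding has_clique_def using K K'
    by (intro exI[of _ K']) (auto simp: card_image finite_image_iff inj_on_eq_iff)
next
  assume "has_clique (\<lambda>x y. E (f x) (f y)) S k"
  then obtain K where K: "K \<subseteq> S" "finite K" "card K = k" "\<forall>x\<in>K. \<forall>y\<in>K. x \<noteq> y \<longrightarrow> E (f x) (f y)"
    unfolding has_clique_def by blast
  have "inj_on f K"
    using assms K(1) inj_on_subset by blast
  then show "has_clique E (f ` S) k"
    unfolding has_clique_def using K
    by (intro exI[of _ "f ` K"]) (auto simp: card_image)
qed

lemma has_clique_le_card_colours:
  assumes "has_clique E S k" and "g ` S \<subseteq> C" and "finite C"
    and proper: "\<And>x y. x \<in> S \<Longrightarrow> y \<in> S \<Longrightarrow> x \<noteq> y \<Longrightarrow> E x y \<Longrightarrow> g x \<noteq> g y"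
  shows "k \<le> card C"
proof -
  obtain K where K: "K \<subseteq> S" "card K = k" "\<forall>x\<in>K. \<forall>y\<in>K. x \<noteq> y \<longrightarrow> E x y"
    using assms(1) unfolding has_clique_def by blast
  have "inj_on g K"
    using K(1,3) proper unfolding inj_on_def by blast
  moreover have "g ` K \<subseteq> C"
    using K(1) assms(2) by blast
  ultimately show ?thesis
    using K(2) card_inj_on_le[OF _ _ \<open>finite C\<close>] by blast
qed

lemma exists_maximal_above:
  assumes "asymp lt" "transp lt" "finite S" "x \<in> S"
  obtains y where "y \<in> S" "x = y \<or> lt x y" "\<forall>z\<in>S. \<not> lt y z"
proof -
  obtain y where y: "y \<in> S" "x = y \<or> lt x y" and max: "\<forall>z\<in>S. lt y z \<longrightarrow> \<not> (x = z \<or> lt x z)"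
    using Finite_Set.bex_max_element_with_property[of S lt "\<lambda>z. x = z \<or> lt x z"] assms
    by (auto intro: asymp_on_subset transp_on_subset)
  have "\<forall>z\<in>S. \<not> lt y z"
    using y(2) max \<open>transp lt\<close> by (metis transpD)
  with y show thesis ..
qed

lemma comparability_clique_greatest:
  assumes "asymp lt" "transp lt" "finite K" "K \<noteq> {}"
    and clique: "\<forall>x\<in>K. \<forall>y\<in>K. x \<noteq> y \<longrightarrow> comparability lt x y"
  obtains t where "t \<in> K" "\<forall>x\<in>K. x \<noteq> t \<longrightarrow> lt x t"
proof -
  obtain t where "t \<in> K" "\<forall>x\<in>K. x \<noteq> t \<longrightarrow> \<not> lt t x"
    using Finite_Set.bex_max_element[of K lt] assms by (auto intro: asymp_on_subset transp_on_subset)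
  with clique that show thesis
    unfolding comparability_def by blast
qed

definition maximal_elements :: "('v \<Rightarrow> 'v \<Rightarrow> bool) \<Rightarrow> 'v set \<Rightarrow> 'v set" where
  "maximal_elements lt S = {x\<in>S. \<forall>y\<in>S. \<not> lt x y}"

lemma has_indep_maximal_elements:
  assumes "finite S" and "m \<le> card (maximal_elements lt S)"
  shows "has_indep (comparability lt) S m"
proof -
  obtain K where K: "K \<subseteq> maximal_elements lt S" "card K = m"
    using assms(2) by (meson obtain_subset_with_card_n)
  moreover have "finite K"
    using K(1) \<open>finite S\<close> unfolding maximal_elements_def by (auto intro: finite_subset)
  ultimately show ?thesis
    unfolding has_indep_def comparability_def maximal_elements_def by (intro exI[of _ K]) auto
qed

lemma has_clique_Suc_by_maximal_element:
  assumes strict: "asymp lt" "transp lt" and "finite S" "S \<noteq> {}"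
    and "has_clique (comparability lt) (S - maximal_elements lt S) n"
  shows "has_clique (comparability lt) S (Suc n)"
proof -
  obtain K where K: "K \<subseteq> S - maximal_elements lt S" "finite K" "card K = n"
      "\<forall>x\<in>K. \<forall>y\<in>K. x \<noteq> y \<longrightarrow> comparability lt x y"
    using assms(5) unfolding has_clique_def by blast
  have "\<exists>x\<in>S. \<forall>k\<in>K. k = x \<or> lt k x"
  proof (cases "K = {}")
    case True
    with \<open>S \<noteq> {}\<close> show ?thesis
      by blast
  next
    case False
    then obtain t where "t \<in> K" "\<forall>k\<in>K. k \<noteq> t \<longrightarrow> lt k t"
      by (rule comparability_clique_greatest[OF strict K(2) _ K(4)])
    with K(1) show ?thesis
      by blast
  qed
  then obtain x where x: "x \<in> S" "\<forall>k\<in>K. k = x \<or> lt k x" ..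
  obtain y where y: "y \<in> S" "x = y \<or> lt x y" "\<forall>z\<in>S. \<not> lt y z"
    using exists_maximal_above[OF strict \<open>finite S\<close> x(1)] .
  then have "y \<in> maximal_elements lt S"
    unfolding maximal_elements_def by blast
  then have "y \<notin> K"
    using K(1) by blast
  have "lt k y" if "k \<in> K" for k
  proof -
    have "k \<noteq> y" "k = x \<or> lt k x"
      using that \<open>y \<notin> K\<close> x(2) by auto
    with y(2) show ?thesis
      using \<open>transp lt\<close> by (metis transpD)
  qed
  with \<open>y \<notin> K\<close> show ?thesis
    unfolding has_clique_def using K y(1)
    by (intro exI[of _ "insert y K"]) (auto simp: comparability_def)
qed

theorem mirsky:
  assumes strict: "asymp lt" "transp lt" and "finite S" and "(n - 1) * (m - 1) < card S"
  shows "has_clique (comparability lt) S n \<or> has_indep (comparability lt) S m"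
  using assms(3,4)
proof (induction n arbitrary: S)
  case 0
  then show ?case
    unfolding has_clique_def by auto
next
  case (Suc n)
  let ?M = "maximal_elements lt S"
  show ?case
  proof (cases "m \<le> card ?M")
    case True
    then show ?thesis
      using has_indep_maximal_elements Suc.prems(1) by blast
  next
    case False
    have "?M \<subseteq> S"
      unfolding maximal_elements_def by blast
    then have "card (S - ?M) = card S - card ?M"
      using Suc.prems(1) by (meson card_Diff_subset finite_subset)
    with False Suc.prems(2) have card_rest: "n \<noteq> 0 \<Longrightarrow> (n - 1) * (m - 1) < card (S - ?M)"
      by (cases n; cases m) (auto simp: algebra_simps)
    have "has_clique (comparability lt) (S - ?M) n \<or> has_indep (comparability lt) (S - ?M) m"
    proof (cases "n = 0")
      case True
      then show ?thesis
        unfolding has_clique_def by auto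
    next
      case False
      then show ?thesis
        using Suc.IH[of "S - ?M"] Suc.prems(1) card_rest by blast
    qed
    then show ?thesis
    proof
      assume "has_clique (comparability lt) (S - ?M) n"
      moreover have "S \<noteq> {}"
        using Suc.prems(2) by auto
      ultimately show ?thesis
        using has_clique_Suc_by_maximal_element[OF strict Suc.prems(1)] by blast
    next
      assume "has_indep (comparability lt) (S - ?M) m"
      then show ?thesis
        unfolding has_indep_def by blast
    qed
  qed
qed

corollary ramsey_good_comparability:
  assumes "asymp lt" "transp lt"
  shows "ramsey_good V (comparability lt) ((n - 1) * (m - 1) + 1) n m"
  unfolding ramsey_good_def using mirsky[OF assms] by simp

lemma not_ramsey_good_complete_multipartite:
  assumes inj: "inj_on f ({..<a} \<times> {..<b})" and into: "f ` ({..<a} \<times> {..<b}) \<subseteq> V"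
    and adj: "\<And>p q. p \<in> {..<a} \<times> {..<b} \<Longrightarrow> q \<in> {..<a} \<times> {..<b} \<Longrightarrow> p \<noteq> q \<Longrightarrow>
                E (f p) (f q) \<longleftrightarrow> fst p \<noteq> fst q"
    and "r \<le> a * b"
  shows "\<not> ramsey_good V E r (Suc a) (Suc b)"
proof -
  obtain T where T: "T \<subseteq> {..<a} \<times> {..<b}" "card T = r"
    using \<open>r \<le> a * b\<close> obtain_subset_with_card_n[of r "{..<a} \<times> {..<b}"]
    by (auto simp: card_cartesian_product)
  have "finite T"
    using T(1) finite_subset by blast
  have "inj_on f T"
    using inj T(1) inj_on_subset by blast
  have adj_T: "E (f p) (f q) \<longleftrightarrow> fst p \<noteq> fst q" if "p \<in> T" "q \<in> T" "p \<noteq> q" for p q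
    using adj that T(1) by blast
  have "\<not> has_clique E (f ` T) (Suc a)"
  proof
    assume "has_clique E (f ` T) (Suc a)"
    then have "has_clique (\<lambda>p q. E (f p) (f q)) T (Suc a)"
      by (simp add: has_clique_image[OF \<open>inj_on f T\<close>])
    then have "Suc a \<le> card {..<a}"
      by (rule has_clique_le_card_colours[where g = fst]) (use T(1) adj_T in auto)
    then show False
      by simp
  qed
  moreover have "\<not> has_indep E (f ` T) (Suc b)"
  proof
    assume "has_indep E (f ` T) (Suc b)"
    then have "has_clique (\<lambda>p q. \<not> E (f p) (f q)) T (Suc b)"
      by (simp add: has_indep_eq_has_clique_compl has_clique_image[OF \<open>inj_on f T\<close>])
    then have "Suc b \<le> card {..<b}"
      by (rule has_clique_le_card_colours[where g = snd]) (use T(1) adj_T in \<open>auto simp: prod_eq_iff\<close>)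
    then show False
      by simp
  qed
  moreover have "f ` T \<subseteq> V" "card (f ` T) = r"
    using T into \<open>inj_on f T\<close> by (auto simp: card_image)
  ultimately show ?thesis
    unfolding ramsey_good_def using \<open>finite T\<close> by blast
qed

lemma sdvd_trans: "sdvd a b \<Longrightarrow> sdvd b c \<Longrightarrow> sdvd a c"
  unfolding sdvd_def using dvd_trans by blast

lemma sdvd_asym: "sdvd a b \<Longrightarrow> \<not> sdvd b a"
  unfolding sdvd_def by blast

lemma mat_adj_eq_comparability: "mat_adj = comparability (\<lambda>A B. sdvd (det A) (det B))"
  unfolding mat_adj_def comparability_def by blast

lemma ramsey_good_mat_graph:
  "ramsey_good (mat_vertices j :: 'a::comm_ring_1 mat set) mat_adj ((n - 1) * (m - 1) + 1) n m"
  unfolding mat_adj_eq_comparability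
  by (rule ramsey_good_comparability) (auto intro: asympI transpI sdvd_trans dest: sdvd_asym)

(* [[2^(a+1), b], [0, 1]]: the determinant records the part a, the entry b separates the
   vertices within a part. *)
definition grid_mat :: "nat \<times> nat \<Rightarrow> int mat" where
  "grid_mat p = mat 2 2 (\<lambda>(i, j). if (i, j) = (0, 0) then 2 ^ Suc (fst p)
     else if (i, j) = (0, 1) then int (snd p) else if (i, j) = (1, 1) then 1 else 0)"

lemma det_grid_mat: "det (grid_mat p) = 2 ^ Suc (fst p)"
proof -
  have "upper_triangular (grid_mat p)" "grid_mat p \<in> carrier_mat 2 2"
    unfolding upper_triangular_def grid_mat_def by auto
  from det_upper_triangular[OF this] show ?thesis
    by (simp add: diag_mat_def grid_mat_def numeral_2_eq_2)
qed

lemma inj_grid_mat: "inj grid_mat"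
proof (rule injI)
  fix p q assume "grid_mat p = grid_mat q"
  then have "grid_mat p $$ (0, 0) = grid_mat q $$ (0, 0)" "grid_mat p $$ (0, 1) = grid_mat q $$ (0, 1)"
    by simp_all
  then show "p = q"
    unfolding grid_mat_def by (simp add: prod_eq_iff)
qed

lemma grid_mat_in_mat_vertices: "grid_mat p \<in> mat_vertices 2"
proof -
  have "\<not> (2::int) ^ Suc (fst p) dvd 1"
    using zdvd_imp_le[of "2 ^ Suc (fst p)" 1] one_less_power[of "2::int" "Suc (fst p)"] by auto
  then show ?thesis
    unfolding mat_vertices_def proper_elem_def by (simp add: det_grid_mat) (simp add: grid_mat_def)
qed

lemma sdvd_power_two_iff: "sdvd ((2::int) ^ i) (2 ^ j) \<longleftrightarrow> i < j"
  unfolding sdvd_def by (auto simp: dvd_power_iff)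

lemma mat_adj_grid_mat: "p \<noteq> q \<Longrightarrow> mat_adj (grid_mat p) (grid_mat q) \<longleftrightarrow> fst p \<noteq> fst q"
  unfolding mat_adj_def det_grid_mat sdvd_power_two_iff using inj_grid_mat[THEN injD, of p q] by auto

lemma not_ramsey_good_mat_graph:
  assumes "r \<le> a * b"
  shows "\<not> ramsey_good (mat_vertices 2 :: int mat set) mat_adj r (Suc a) (Suc b)"
proof (rule not_ramsey_good_complete_multipartite[where f = grid_mat])
  show "inj_on grid_mat ({..<a} \<times> {..<b})"
    using inj_grid_mat inj_on_subset subset_UNIV by blast
qed (use assms grid_mat_in_mat_vertices mat_adj_grid_mat in auto)

lemma po_adj_eq_comparability: "po_adj R = comparability (\<lambda>x y. (x, y) \<in> R \<and> x \<noteq> y)"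
  unfolding po_adj_def comparability_def by blast

lemma ramsey_good_po_graph:
  assumes "partial_order_on A R"
  shows "ramsey_good A (po_adj R) ((n - 1) * (m - 1) + 1) n m"
proof -
  have "trans R" "antisym R"
    using assms unfolding partial_order_on_def preorder_on_def by auto
  then have "asymp (\<lambda>x y. (x, y) \<in> R \<and> x \<noteq> y)" "transp (\<lambda>x y. (x, y) \<in> R \<and> x \<noteq> y)"
    unfolding asymp_on_def transp_on_def trans_def antisym_def by blast+
  then show ?thesis
    unfolding po_adj_eq_comparability by (rule ramsey_good_comparability)
qed

lemma not_ramsey_good_po_graph:
  assumes "r \<le> a * b"
  obtains R where "partial_order_on (UNIV :: nat set) R" "\<not> ramsey_good UNIV (po_adj R) r (Suc a) (Suc b)"
proof
  define R where "R = {(x, y). x = y \<or> fst (prod_decode x) < fst (prod_decode y)}"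
  show "partial_order_on UNIV R"
    unfolding partial_order_on_def preorder_on_def refl_on_def trans_def antisym_def R_def by auto
  show "\<not> ramsey_good UNIV (po_adj R) r (Suc a) (Suc b)"
    using assms
    by (intro not_ramsey_good_complete_multipartite[where f = prod_encode])
      (auto simp: inj_prod_encode po_adj_def R_def)
qed

theorem theorem3p16:
  fixes n m :: nat
  assumes "n \<ge> 1" and "m \<ge> 1"
  shows "((\<exists>x::'a::comm_ring_1. proper_elem x) \<longrightarrow>
            (\<forall>j\<ge>2. ramsey_good (mat_vertices j :: 'a mat set) mat_adj ((n - 1) * (m - 1) + 1) n m))
       \<and> (\<forall>r < (n - 1) * (m - 1) + 1. \<exists>j\<ge>2.
            \<not> ramsey_good (mat_vertices j :: int mat set) mat_adj r n m)
       \<and> (\<forall>(A::'b set) R. partial_order_on A R \<longrightarrow>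
            ramsey_good A (po_adj R) ((n - 1) * (m - 1) + 1) n m)
       \<and> (\<forall>r < (n - 1) * (m - 1) + 1. \<exists>(A::nat set) R.
            partial_order_on A R \<and> \<not> ramsey_good A (po_adj R) r n m)"
proof -
  have n_eq: "Suc (n - 1) = n" and m_eq: "Suc (m - 1) = m"
    using assms by simp_all
  have mat_lower: "\<not> ramsey_good (mat_vertices 2 :: int mat set) mat_adj r n m"
    if "r \<le> (n - 1) * (m - 1)" for r
    using not_ramsey_good_mat_graph[OF that] n_eq m_eq by simp
  have po_lower: "\<exists>(A::nat set) R. partial_order_on A R \<and> \<not> ramsey_good A (po_adj R) r n m"
    if "r \<le> (n - 1) * (m - 1)" for r
    using not_ramsey_good_po_graph[OF that] n_eq m_eq by metis
  show ?thesis
    using ramsey_good_mat_graph ramsey_good_po_graph mat_lower po_lower by (auto intro!: exI[of _ 2])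
qed

end
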